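(* Let $k\ge1$ and $t\ge0$ be integers, and let $P_j=\prod_{i=1}^{j}\big(1-\frac{1}{2^i}\big)$. Regarding each of the following as functions of $n$ variables for any $n$ at least the largest variable index appearing, we have: \[\mathrm{dt}_k(x_1\cdots x_k)=P_k,\] \[\mathrm{dt}_k(x_1\cdots x_k\oplus x_{k+1}\cdots x_{2k})=2P_k(1-P_k),\] \[\mathrm{dt}_{k+t}\big(x_{2k+1}\cdots x_{2k+t}(x_1\cdots x_k\oplus x_{k+1}\cdots x_{2k})\big)=2P_{k+t}(1-P_k).\]
   Context: $\oplus$ denotes addition in $\mathbb{F}_2$ and $\mathbb{F}_2^n$. For $f:\mathbb{F}_2^n\to\mathbb{F}_2$ and $1\le k\le n$, \[\mathrm{dt}_k(f)=\frac{\big|\{(u_0,\dots,u_k)\in(\mathbb{F}_2^n)^{k+1}:\ \bigoplus_{c_1,\dots,c_k\in\mathbb{F}_2} f\big((\bigoplus_{i=1}^k c_iu_i)\oplus u_0\big)\neq0\}\big|}{2^{(k+1)n}}.\] *)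

theory Defs
  imports Complex_Main "HOL-Library.FuncSet"
begin

text \<open>F_2 is modelled by bool (addition = xor = (\<noteq>), multiplication = conjunction).
  A vector of F_2^n is a function nat \<Rightarrow> bool supported on the coordinates {1..n}.
  A Boolean function of n variables is any f :: (nat \<Rightarrow> bool) \<Rightarrow> bool; only its values
  on cube n matter.\<close>

definition cube :: "nat \<Rightarrow> (nat \<Rightarrow> bool) set" where
  "cube n = {u. \<forall>j. u j \<longrightarrow> j \<in> {1..n}}"

text \<open>The point (c_1 u_1 + ... + c_k u_k) + u_0, where the coefficient vector c is encoded by
  the set C = {i. c_i = 1} \<subseteq> {1..k}; the xor of a family of bits is the parity of the number
  of true bits.\<close>
definition comb :: "(nat \<Rightarrow> (nat \<Rightarrow> bool)) \<Rightarrow> (nat \<Rightarrow> bool) \<Rightarrow> nat set \<Rightarrow> (nat \<Rightarrow> bool)" where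
  "comb us u0 C = (\<lambda>j. u0 j \<noteq> odd (card {i \<in> C. us i j}))"

definition deriv_val :: "nat \<Rightarrow> ((nat \<Rightarrow> bool) \<Rightarrow> bool) \<Rightarrow> (nat \<Rightarrow> (nat \<Rightarrow> bool)) \<Rightarrow> (nat \<Rightarrow> bool) \<Rightarrow> bool" where
  "deriv_val k f us u0 = odd (card {C \<in> Pow {1..k}. f (comb us u0 C)})"

definition dt :: "nat \<Rightarrow> nat \<Rightarrow> ((nat \<Rightarrow> bool) \<Rightarrow> bool) \<Rightarrow> real" where
  "dt k n f = real (card {(u0, us). u0 \<in> cube n \<and> us \<in> PiE {1..k} (\<lambda>_. cube n)
                                   \<and> deriv_val k f us u0})
              / 2 ^ ((k + 1) * n)"

definition Pk :: "nat \<Rightarrow> real" where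
  "Pk j = (\<Prod>i=1..j. 1 - 1 / 2 ^ i)"

end

theory Submission
  imports Defs
begin

(*
  The k-th derivative of the monomial x_S (card S = k) at (u_0; u_1, ..., u_k) is the parity of the
  number of solutions C of a square linear system over F_2 whose matrix consists of the u_i
  restricted to the coordinates in S. This parity is odd exactly when the matrix is invertible;
  otherwise adding a dependency pairs the solutions off. Derivatives are additive, so for
  x_T (x_A + x_B) the derivative is 1 iff exactly one of the restrictions to T u A and to T u B is
  invertible. Read by columns, these conditions only involve the columns indexed by T u A u B, and
  counting independent columns one at a time produces the products
  (2^d - 2^b) (2^d - 2^(b+1)) ... (2^d - 2^(d-1)) = 2^(d (d-b)) P_(d-b).
*)

lemma card_sym_diff_parity:
  assumes "finite A" "finite B"
  shows "odd (card (sym_diff A B)) \<longleftrightarrow> odd (card A) \<noteq> odd (card B)"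
proof -
  have "card A + card B = card (A \<union> B) + card (A \<inter> B)"
    using assms by (rule card_Un_Int)
  moreover have "card (A \<union> B) = card (sym_diff A B) + card (A \<inter> B)"
  proof -
    have "A \<union> B = sym_diff A B \<union> A \<inter> B" by blast
    then show ?thesis
      using assms by (simp only:) (intro card_Un_disjoint; auto)
  qed
  ultimately show ?thesis by presburger
qed

lemma card_eq_twice_if_swapping_involution:
  assumes "finite F"
    and "\<And>x. x \<in> F \<Longrightarrow> s x \<in> F \<and> s (s x) = x \<and> (P (s x) \<longleftrightarrow> \<not> P x)"
  shows "card F = 2 * card {x\<in>F. P x}"
proof -
  have "bij_betw s {x\<in>F. P x} {x\<in>F. \<not> P x}"
    by (rule bij_betw_byWitness[where f' = s]) (use assms(2) in auto)
  then have "card {x\<in>F. \<not> P x} = card {x\<in>F. P x}"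
    by (simp add: bij_betw_same_card)
  moreover have "card ({x\<in>F. P x} \<union> {x\<in>F. \<not> P x}) = card {x\<in>F. P x} + card {x\<in>F. \<not> P x}"
    using assms(1) by (intro card_Un_disjoint) auto
  moreover have "{x\<in>F. P x} \<union> {x\<in>F. \<not> P x} = F" by blast
  ultimately show ?thesis by simp
qed

lemma card_eq_sum_of_bool: "finite A \<Longrightarrow> card {x\<in>A. P x} = (\<Sum>x\<in>A. of_bool (P x))"
  by (simp add: Int_def)

lemma card_filter_xor:
  assumes "finite X"
  shows "card {x\<in>X. P x \<noteq> Q x} + 2 * card {x\<in>X. P x \<and> Q x} = card {x\<in>X. P x} + card {x\<in>X. Q x}"
proof -
  have "card {x\<in>X. P x} + card {x\<in>X. Q x} = card ({x\<in>X. P x} \<union> {x\<in>X. Q x}) + card ({x\<in>X. P x} \<inter> {x\<in>X. Q x})"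
    using assms by (intro card_Un_Int) auto
  moreover have "{x\<in>X. P x} \<union> {x\<in>X. Q x} = {x\<in>X. P x \<noteq> Q x} \<union> {x\<in>X. P x \<and> Q x}"
    and "{x\<in>X. P x} \<inter> {x\<in>X. Q x} = {x\<in>X. P x \<and> Q x}" by blast+
  moreover have "card ({x\<in>X. P x \<noteq> Q x} \<union> {x\<in>X. P x \<and> Q x}) = card {x\<in>X. P x \<noteq> Q x} + card {x\<in>X. P x \<and> Q x}"
    using assms by (intro card_Un_disjoint) auto
  ultimately show ?thesis by simp
qed

section \<open>Linear algebra over F_2\<close>

text \<open>Vectors of \<open>F\<^sub>2\<^sup>J\<close> are represented by their supports: \<open>f2_sum M C J\<close> is the support
  of the sum of the rows \<open>M i\<close>, \<open>i \<in> C\<close>, restricted to the coordinates \<open>J\<close>.\<close>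

definition f2_sum :: "('i \<Rightarrow> 'j \<Rightarrow> bool) \<Rightarrow> 'i set \<Rightarrow> 'j set \<Rightarrow> 'j set" where
  "f2_sum M C J = {j\<in>J. odd (card {i\<in>C. M i j})}"

definition f2_indep :: "('i \<Rightarrow> 'j \<Rightarrow> bool) \<Rightarrow> 'i set \<Rightarrow> 'j set \<Rightarrow> bool" where
  "f2_indep M I J \<longleftrightarrow> (\<forall>C\<subseteq>I. C \<noteq> {} \<longrightarrow> f2_sum M C J \<noteq> {})"

lemma f2_sum_subset: "f2_sum M C J \<subseteq> J"
  unfolding f2_sum_def by auto

lemma f2_sum_sym_diff:
  assumes "finite C" "finite D"
  shows "f2_sum M (sym_diff C D) J = sym_diff (f2_sum M C J) (f2_sum M D J)"
proof -
  have "{i \<in> sym_diff C D. M i j} = sym_diff {i\<in>C. M i j} {i\<in>D. M i j}" for j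
    by blast
  then have "odd (card {i \<in> sym_diff C D. M i j})
      \<longleftrightarrow> odd (card {i\<in>C. M i j}) \<noteq> odd (card {i\<in>D. M i j})" for j
    using assms by (simp add: card_sym_diff_parity)
  then show ?thesis
    unfolding f2_sum_def by blast
qed

lemma f2_sum_cong:
  assumes "\<And>i j. i \<in> C \<Longrightarrow> j \<in> J \<Longrightarrow> M i j = M' i j"
  shows "f2_sum M C J = f2_sum M' C J"
proof -
  have "{i\<in>C. M i j} = {i\<in>C. M' i j}" if "j \<in> J" for j
    using that assms by auto
  then show ?thesis unfolding f2_sum_def by auto
qed

lemma f2_indep_cong:
  assumes "\<And>i j. i \<in> I \<Longrightarrow> j \<in> J \<Longrightarrow> M i j = M' i j"
  shows "f2_indep M I J \<longleftrightarrow> f2_indep M' I J"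
proof -
  have "f2_sum M C J = f2_sum M' C J" if "C \<subseteq> I" for C
    using that assms by (intro f2_sum_cong) auto
  then show ?thesis unfolding f2_indep_def by blast
qed

lemma f2_indep_empty [simp]: "f2_indep M {} J"
  unfolding f2_indep_def by auto

lemma inj_on_f2_sum:
  assumes "finite I" "f2_indep M I J"
  shows "inj_on (\<lambda>C. f2_sum M C J) (Pow I)"
proof (rule inj_onI)
  fix C D assume C: "C \<in> Pow I" and D: "D \<in> Pow I" and eq: "f2_sum M C J = f2_sum M D J"
  have "finite C" "finite D" using C D assms(1) finite_subset by auto
  then have "f2_sum M (sym_diff C D) J = {}" using eq by (simp add: f2_sum_sym_diff)
  moreover have "sym_diff C D \<subseteq> I" using C D by auto
  ultimately have "sym_diff C D = {}" using assms(2) unfolding f2_indep_def by blast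
  then show "C = D" by blast
qed

lemma card_f2_span:
  assumes "finite I" "f2_indep M I J"
  shows "card ((\<lambda>C. f2_sum M C J) ` Pow I) = 2 ^ card I"
  using card_image[OF inj_on_f2_sum[OF assms]] assms(1) by (simp add: card_Pow)

lemma f2_span_eq_Pow:
  assumes "finite I" "finite J" "card I = card J" "f2_indep M I J"
  shows "(\<lambda>C. f2_sum M C J) ` Pow I = Pow J"
proof (rule card_subset_eq)
  show "finite (Pow J)" using assms(2) by simp
  show "(\<lambda>C. f2_sum M C J) ` Pow I \<subseteq> Pow J" using f2_sum_subset by (intro image_subsetI) simp
  show "card ((\<lambda>C. f2_sum M C J) ` Pow I) = card (Pow J)"
    using card_f2_span[OF assms(1,4)] assms(2,3) by (simp add: card_Pow)
qed

lemma f2_sum_insert: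
  assumes "a \<notin> Z" "finite Z"
  shows "f2_sum M (insert a Z) J = sym_diff (f2_sum M Z J) {j\<in>J. M a j}"
proof -
  have "insert a Z = sym_diff Z {a}" using assms(1) by blast
  moreover have "{i\<in>{a}. M i j} = (if M a j then {a} else {})" for j by auto
  then have "f2_sum M {a} J = {j\<in>J. M a j}" unfolding f2_sum_def by auto
  ultimately show ?thesis using assms(2) by (simp add: f2_sum_sym_diff)
qed

lemma f2_indep_insert:
  assumes "a \<notin> Y" "finite Y"
  shows "f2_indep (M(a := x)) (insert a Y) J \<longleftrightarrow>
         f2_indep M Y J \<and> {j\<in>J. x j} \<notin> (\<lambda>C. f2_sum M C J) ` Pow Y"
    (is "f2_indep ?M _ _ \<longleftrightarrow> _")
proof -
  have old: "f2_sum ?M Z J = f2_sum M Z J" if "Z \<in> Pow Y" for Z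
    using that assms(1) by (intro f2_sum_cong) auto
  have new: "f2_sum ?M (insert a Z) J = sym_diff (f2_sum M Z J) {j\<in>J. x j}" if "Z \<in> Pow Y" for Z
    using that assms f2_sum_insert[of a Z ?M J] old[OF that] finite_subset by auto
  have "f2_indep ?M (insert a Y) J \<longleftrightarrow> (\<forall>C\<in>Pow (insert a Y). C \<noteq> {} \<longrightarrow> f2_sum ?M C J \<noteq> {})"
    unfolding f2_indep_def by auto
  also have "\<dots> \<longleftrightarrow> (\<forall>Z\<in>Pow Y. Z \<noteq> {} \<longrightarrow> f2_sum ?M Z J \<noteq> {}) \<and>
                    (\<forall>Z\<in>Pow Y. f2_sum ?M (insert a Z) J \<noteq> {})"
    by (simp add: Pow_insert ball_Un)
  also have "\<dots> \<longleftrightarrow> f2_indep M Y J \<and> (\<forall>Z\<in>Pow Y. f2_sum M Z J \<noteq> {j\<in>J. x j})"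
    unfolding f2_indep_def using old new by (simp add: Ball_def) blast
  finally show ?thesis by auto
qed

lemma f2_indep_transpose:
  assumes "finite I" "finite J" "card I = card J" "f2_indep M J I"
  shows "f2_indep (\<lambda>i j. M j i) I J"
  unfolding f2_indep_def
proof (intro allI impI notI)
  fix X assume X: "X \<subseteq> I" "X \<noteq> {}" and dep: "f2_sum (\<lambda>i j. M j i) X J = {}"
  obtain i0 where i0: "i0 \<in> X" using X(2) by blast
  have "{i0} \<in> (\<lambda>Y. f2_sum M Y I) ` Pow J"
    using f2_span_eq_Pow[OF assms(2,1) assms(3)[symmetric] assms(4)] i0 X(1) by auto
  then obtain Y where Y: "Y \<subseteq> J" "f2_sum M Y I = {i0}" by auto
  have fin: "finite X" "finite Y" using X(1) Y(1) assms(1,2) finite_subset by auto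
  \<comment> \<open>double counting the incidences between X and Y gives a parity contradiction\<close>
  have "(\<Sum>i\<in>X. card {j\<in>Y. M j i}) = (\<Sum>i\<in>X. \<Sum>j\<in>Y. if M j i then 1 else 0)"
    using fin by (simp add: sum.If_cases Int_def)
  also have "\<dots> = (\<Sum>j\<in>Y. \<Sum>i\<in>X. if M j i then 1 else 0)"
    by (rule sum.swap)
  also have "\<dots> = (\<Sum>j\<in>Y. card {i\<in>X. M j i})"
    using fin by (simp add: sum.If_cases Int_def)
  finally have swap: "(\<Sum>i\<in>X. card {j\<in>Y. M j i}) = (\<Sum>j\<in>Y. card {i\<in>X. M j i})" .
  have "even (card {i\<in>X. M j i})" if "j \<in> Y" for j
    using that Y(1) dep unfolding f2_sum_def by blast
  then have "even (\<Sum>j\<in>Y. card {i\<in>X. M j i})"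
    by (intro dvd_sum) 
  moreover have "{i\<in>X. odd (card {j\<in>Y. M j i})} = {i0}"
    using X(1) Y(2) i0 unfolding f2_sum_def by blast
  then have "odd (\<Sum>i\<in>X. card {j\<in>Y. M j i})"
    using fin(1) by (simp add: even_sum_iff)
  ultimately show False using swap by simp
qed

lemma f2_indep_transpose_iff:
  assumes "finite I" "finite J" "card I = card J"
  shows "f2_indep (\<lambda>i j. M j i) I J \<longleftrightarrow> f2_indep M J I"
  using f2_indep_transpose[OF assms] f2_indep_transpose[of J I "\<lambda>i j. M j i"] assms by auto

lemma odd_card_f2_sum_fibre:
  assumes "finite I" "finite J" "card I = card J" "b \<subseteq> J"
  shows "odd (card {C\<in>Pow I. f2_sum M C J = b}) \<longleftrightarrow> f2_indep M I J"
proof (cases "f2_indep M I J")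
  case True
  then obtain C0 where C0: "C0 \<subseteq> I" "f2_sum M C0 J = b"
    using f2_span_eq_Pow[OF assms(1-3)] assms(4) by (metis PowD PowI imageE)
  have "{C\<in>Pow I. f2_sum M C J = b} = {C0}"
    using C0 inj_on_f2_sum[OF assms(1) True] by (auto dest: inj_onD)
  then show ?thesis using True by simp
next
  case False
  then obtain X where X: "X \<subseteq> I" "X \<noteq> {}" "f2_sum M X J = {}"
    unfolding f2_indep_def by blast
  obtain x0 where "x0 \<in> X" using X(2) by blast
  \<comment> \<open>adding the dependency X pairs off the solutions containing x0 with those that do not\<close>
  have "card {C\<in>Pow I. f2_sum M C J = b} = 2 * card {C\<in>{C\<in>Pow I. f2_sum M C J = b}. x0 \<notin> C}"
  proof (rule card_eq_twice_if_swapping_involution[where s = "\<lambda>C. sym_diff C X"])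
    fix C assume C: "C \<in> {C\<in>Pow I. f2_sum M C J = b}"
    then have "finite C" using assms(1) finite_subset by auto
    then have "f2_sum M (sym_diff C X) J = b"
      using C X(3) finite_subset[OF X(1) assms(1)] by (simp add: f2_sum_sym_diff)
    then show "sym_diff C X \<in> {C\<in>Pow I. f2_sum M C J = b} \<and> sym_diff (sym_diff C X) X = C \<and>
        (x0 \<notin> sym_diff C X \<longleftrightarrow> \<not> x0 \<notin> C)"
      using C X(1) \<open>x0 \<in> X\<close> by auto
  qed (use assms(1) in simp)
  then show ?thesis using False by simp
qed

section \<open>Derivatives of monomials\<close>

lemma deriv_val_xor:
  "deriv_val K (\<lambda>x. f x \<noteq> g x) us u0 \<longleftrightarrow> deriv_val K f us u0 \<noteq> deriv_val K g us u0"
proof -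
  have "{C\<in>Pow {1..K}. f (comb us u0 C) \<noteq> g (comb us u0 C)} =
        sym_diff {C\<in>Pow {1..K}. f (comb us u0 C)} {C\<in>Pow {1..K}. g (comb us u0 C)}"
    by blast
  then show ?thesis unfolding deriv_val_def by (simp add: card_sym_diff_parity)
qed

lemma deriv_val_monomial:
  assumes "finite S" "card S = K"
  shows "deriv_val K (\<lambda>x. \<forall>i\<in>S. x i) us u0 \<longleftrightarrow> f2_indep us {1..K} S"
proof -
  have "{C\<in>Pow {1..K}. \<forall>j\<in>S. comb us u0 C j} = {C\<in>Pow {1..K}. f2_sum us C S = {j\<in>S. \<not> u0 j}}"
    unfolding comb_def f2_sum_def by auto
  then show ?thesis
    unfolding deriv_val_def using assms by (simp only:) (rule odd_card_f2_sum_fibre; auto)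
qed

lemma bij_betw_cube_Pow: "bij_betw (\<lambda>x. {i. x i}) (cube d) (Pow {1..d})"
  by (rule bij_betw_byWitness[where f' = "\<lambda>A i. i \<in> A"]) (auto simp: cube_def)

lemma finite_cube [simp]: "finite (cube d)"
  using bij_betw_finite[OF bij_betw_cube_Pow] by simp

lemma card_cube: "card (cube d) = 2 ^ d"
  using bij_betw_same_card[OF bij_betw_cube_Pow] by (simp add: card_Pow)

lemma bij_betw_PiE_Un:
  assumes "I \<inter> J = {}"
  shows "bij_betw (\<lambda>(u, v). override_on u v J) (PiE I F \<times> PiE J F) (PiE (I \<union> J) F)"
  by (rule bij_betw_byWitness[where f' = "\<lambda>w. (restrict w I, restrict w J)"])
     (use assms in \<open>auto simp: override_on_def PiE_def extensional_def fun_eq_iff\<close>)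

lemma sum_PiE_Un:
  assumes "I \<inter> J = {}"
  shows "(\<Sum>w\<in>PiE (I \<union> J) F. h w) = (\<Sum>u\<in>PiE I F. \<Sum>v\<in>PiE J F. h (override_on u v J))"
  by (simp add: sum.reindex_bij_betw[OF bij_betw_PiE_Un[OF assms], symmetric]
      sum.cartesian_product case_prod_unfold)

lemma card_PiE_Un_filter:
  assumes "I \<inter> J = {}" "finite I" "finite J" "\<And>i. finite (F i)"
  shows "card {w\<in>PiE (I \<union> J) F. P w} = (\<Sum>u\<in>PiE I F. card {v\<in>PiE J F. P (override_on u v J)})"
proof -
  have "card {w\<in>PiE (I \<union> J) F. P w} = (\<Sum>w\<in>PiE (I \<union> J) F. of_bool (P w))"
    using assms by (intro card_eq_sum_of_bool finite_PiE) auto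
  also have "\<dots> = (\<Sum>u\<in>PiE I F. \<Sum>v\<in>PiE J F. of_bool (P (override_on u v J)))"
    using assms(1) by (rule sum_PiE_Un)
  also have "\<dots> = (\<Sum>u\<in>PiE I F. card {v\<in>PiE J F. P (override_on u v J)})"
    using assms by (intro sum.cong refl card_eq_sum_of_bool[symmetric] finite_PiE)
  finally show ?thesis .
qed

lemma card_PiE_Un_filter_conj:
  assumes "I \<inter> J = {}" "finite I" "finite J" "\<And>i. finite (F i)"
    and P: "\<And>w w'. (\<And>i. i \<in> I \<Longrightarrow> w i = w' i) \<Longrightarrow> P w = P w'"
    and Q: "\<And>w w'. (\<And>j. j \<in> J \<Longrightarrow> w j = w' j) \<Longrightarrow> Q w = Q w'"
  shows "card {w\<in>PiE (I \<union> J) F. P w \<and> Q w} = card {u\<in>PiE I F. P u} * card {v\<in>PiE J F. Q v}"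
proof -
  have "P (override_on u v J) = P u" "Q (override_on u v J) = Q v" for u v
    using assms(1) by (auto intro!: P Q simp: override_on_def)
  then have "card {w\<in>PiE (I \<union> J) F. P w \<and> Q w} = (\<Sum>u\<in>PiE I F. card {v\<in>PiE J F. P u \<and> Q v})"
    using card_PiE_Un_filter[OF assms(1-4)] by simp
  also have "\<dots> = (\<Sum>u\<in>PiE I F. of_bool (P u) * card {v\<in>PiE J F. Q v})"
    by (intro sum.cong) auto
  also have "\<dots> = card {u\<in>PiE I F. P u} * card {v\<in>PiE J F. Q v}"
    using assms(2,4) by (simp add: sum_distrib_right card_eq_sum_of_bool finite_PiE)
  finally show ?thesis .
qed

lemma card_PiE_Un_Un_filter_conj:
  assumes fin: "finite T" "finite A" "finite B" "\<And>i. finite (F i)"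
    and disj: "T \<inter> A = {}" "T \<inter> B = {}" "A \<inter> B = {}"
    and P: "\<And>w w'. (\<And>i. i \<in> T \<union> A \<Longrightarrow> w i = w' i) \<Longrightarrow> P w = P w'"
    and Q: "\<And>w w'. (\<And>i. i \<in> T \<union> B \<Longrightarrow> w i = w' i) \<Longrightarrow> Q w = Q w'"
  shows "card {w\<in>PiE (T \<union> A \<union> B) F. P w \<and> Q w} =
         (\<Sum>u\<in>PiE T F. card {v\<in>PiE A F. P (override_on u v A)} * card {v\<in>PiE B F. Q (override_on u v B)})"
proof -
  have "card {w\<in>PiE (T \<union> A \<union> B) F. P w \<and> Q w} =
        (\<Sum>u\<in>PiE T F. card {v\<in>PiE (A \<union> B) F. P (override_on u v (A \<union> B)) \<and> Q (override_on u v (A \<union> B))})"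
    using card_PiE_Un_filter[of T "A \<union> B" F] fin disj by (simp add: Un_assoc Int_Un_distrib)
  also have "\<dots> = (\<Sum>u\<in>PiE T F. card {v\<in>PiE (A \<union> B) F. P (override_on u v A) \<and> Q (override_on u v B)})"
    using disj by (intro sum.cong refl arg_cong[where f = card] Collect_cong conj_cong P Q)
      (auto simp: override_on_def)
  also have "\<dots> = (\<Sum>u\<in>PiE T F. card {v\<in>PiE A F. P (override_on u v A)} * card {v\<in>PiE B F. Q (override_on u v B)})"
    using fin disj by (intro sum.cong refl card_PiE_Un_filter_conj P Q) (auto simp: override_on_def)
  finally show ?thesis .
qed

lemma sum_PiE_insert:
  assumes "a \<notin> J"
  shows "(\<Sum>w\<in>PiE (insert a J) F. h w) = (\<Sum>v\<in>PiE J F. \<Sum>y\<in>F a. h (v(a := y)))"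
proof -
  have "(\<Sum>w\<in>PiE (insert a J) F. h w) = (\<Sum>(y, v)\<in>F a \<times> PiE J F. h (v(a := y)))"
    unfolding PiE_insert_eq
    by (subst sum.reindex[OF inj_combinator[OF assms]]) (simp add: comp_def case_prod_unfold)
  also have "\<dots> = (\<Sum>y\<in>F a. \<Sum>v\<in>PiE J F. h (v(a := y)))"
    by (simp add: sum.cartesian_product)
  finally show ?thesis by (simp add: sum.swap[where A = "F a"])
qed

lemma card_PiE_insert_filter:
  assumes "a \<notin> J" "finite J" "\<And>i. finite (F i)"
  shows "card {w\<in>PiE (insert a J) F. P w} = (\<Sum>v\<in>PiE J F. card {y\<in>F a. P (v(a := y))})"
proof -
  have "card {w\<in>PiE (insert a J) F. P w} = (\<Sum>w\<in>PiE (insert a J) F. of_bool (P w))"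
    using assms by (intro card_eq_sum_of_bool finite_PiE) auto
  also have "\<dots> = (\<Sum>v\<in>PiE J F. \<Sum>y\<in>F a. of_bool (P (v(a := y))))"
    using assms(1) by (rule sum_PiE_insert)
  also have "\<dots> = (\<Sum>v\<in>PiE J F. card {y\<in>F a. P (v(a := y))})"
    using assms by (intro sum.cong refl card_eq_sum_of_bool[symmetric])
  finally show ?thesis .
qed

definition transpose_tuple :: "nat \<Rightarrow> nat \<Rightarrow> (nat \<Rightarrow> nat \<Rightarrow> bool) \<Rightarrow> nat \<Rightarrow> nat \<Rightarrow> bool" where
  "transpose_tuple n K us = (\<lambda>j\<in>{1..n}. \<lambda>i. i \<in> {1..K} \<and> us i j)"

lemma transpose_tuple_in_PiE: "transpose_tuple n K us \<in> PiE {1..n} (\<lambda>_. cube K)"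
  unfolding transpose_tuple_def cube_def by auto

lemma transpose_tuple_transpose_tuple:
  assumes "us \<in> PiE {1..K} (\<lambda>_. cube n)"
  shows "transpose_tuple K n (transpose_tuple n K us) = us"
proof
  fix i
  show "transpose_tuple K n (transpose_tuple n K us) i = us i"
  proof (cases "i \<in> {1..K}")
    case True
    then have "us i \<in> cube n" using assms by blast
    then show ?thesis using True unfolding transpose_tuple_def cube_def by auto
  qed (use assms in \<open>auto simp: transpose_tuple_def\<close>)
qed

lemma bij_betw_transpose_tuple:
  "bij_betw (transpose_tuple n K) (PiE {1..K} (\<lambda>_. cube n)) (PiE {1..n} (\<lambda>_. cube K))"
  using transpose_tuple_transpose_tuple transpose_tuple_in_PiE
  by (intro bij_betw_byWitness[where f' = "transpose_tuple K n"]) blast+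

lemma f2_indep_transpose_tuple:
  assumes "S \<subseteq> {1..n}" "card S = K"
  shows "f2_indep us {1..K} S \<longleftrightarrow> f2_indep (transpose_tuple n K us) S {1..K}"
proof -
  have "f2_indep us {1..K} S \<longleftrightarrow> f2_indep (\<lambda>i j. transpose_tuple n K us j i) {1..K} S"
    using assms(1) by (intro f2_indep_cong) (auto simp: transpose_tuple_def)
  also have "\<dots> \<longleftrightarrow> f2_indep (transpose_tuple n K us) S {1..K}"
    using assms finite_subset by (intro f2_indep_transpose_iff) auto
  finally show ?thesis .
qed

lemma dt_eq_card_columns:
  assumes S: "S \<subseteq> {1..n}"
    and deriv: "\<And>us u0. us \<in> PiE {1..K} (\<lambda>_. cube n) \<Longrightarrow>
                  deriv_val K f us u0 \<longleftrightarrow> Q (transpose_tuple n K us)"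
    and Q: "\<And>w w'. (\<And>j. j \<in> S \<Longrightarrow> w j = w' j) \<Longrightarrow> Q w = Q w'"
  shows "dt K n f = card {w\<in>PiE S (\<lambda>_. cube K). Q w} / 2 ^ (K * card S)"
proof -
  define N where "N = card {w\<in>PiE S (\<lambda>_. cube K). Q w}"
  have fin: "finite S" using S by (rule finite_subset) simp
  have "{1..n} = S \<union> ({1..n} - S)" using S by auto
  then have "card {w\<in>PiE {1..n} (\<lambda>_. cube K). Q w} =
             card {w\<in>PiE (S \<union> ({1..n} - S)) (\<lambda>_. cube K). Q w \<and> True}"
    by simp
  also have "\<dots> = N * card {w\<in>PiE ({1..n} - S) (\<lambda>_. cube K). True}"
    unfolding N_def using fin by (intro card_PiE_Un_filter_conj Q) auto
  also have "card {w\<in>PiE ({1..n} - S) (\<lambda>_. cube K). True} = 2 ^ (K * (n - card S))"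
    using card_Diff_subset[OF fin S] by (simp add: card_PiE card_cube power_mult)
  finally have columns: "card {w\<in>PiE {1..n} (\<lambda>_. cube K). Q w} = N * 2 ^ (K * (n - card S))" .
  have "{(u0, us). u0 \<in> cube n \<and> us \<in> PiE {1..K} (\<lambda>_. cube n) \<and> deriv_val K f us u0}
        = cube n \<times> {us\<in>PiE {1..K} (\<lambda>_. cube n). Q (transpose_tuple n K us)}"
    using deriv by auto
  then have "dt K n f = 2 ^ n * card {w\<in>PiE {1..n} (\<lambda>_. cube K). Q w} / 2 ^ ((K + 1) * n)"
    unfolding dt_def
    using bij_betw_same_card[OF bij_betw_Collect[OF bij_betw_transpose_tuple refl]]
    by (simp add: card_cartesian_product card_cube)
  moreover obtain m where "n = card S + m"
    using card_mono[OF _ S] le_Suc_ex by fastforce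
  then have "(K + 1) * n = n + K * (n - card S) + K * card S"
    by (simp add: algebra_simps)
  ultimately show ?thesis
    unfolding columns N_def by (simp add: power_add)
qed

section \<open>Counting independent families\<close>

lemma card_cube_notin_f2_span:
  assumes "finite B" "f2_indep w B {1..d}"
  shows "card {y\<in>cube d. {j\<in>{1..d}. y j} \<notin> (\<lambda>C. f2_sum w C {1..d}) ` Pow B} = 2 ^ d - 2 ^ card B"
proof -
  let ?span = "(\<lambda>C. f2_sum w C {1..d}) ` Pow B"
  have "card {y\<in>cube d. {j\<in>{1..d}. y j} \<notin> ?span} = card {A\<in>Pow {1..d}. A \<notin> ?span}"
    by (rule bij_betw_same_card, rule bij_betw_Collect[OF bij_betw_cube_Pow]) (auto simp: cube_def)
  also have "{A\<in>Pow {1..d}. A \<notin> ?span} = Pow {1..d} - ?span" by blast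
  also have "card (Pow {1..d} - ?span) = 2 ^ d - 2 ^ card B"
  proof -
    have "?span \<subseteq> Pow {1..d}" using f2_sum_subset by (intro image_subsetI) simp
    then show ?thesis
      using card_f2_span[OF assms] assms(1) by (simp add: card_Diff_subset card_Pow)
  qed
  finally show ?thesis .
qed

lemma card_f2_indep_extensions:
  assumes "finite J" "finite B" "B \<inter> J = {}"
  shows "card {v\<in>PiE J (\<lambda>_. cube d). f2_indep (override_on w v J) (B \<union> J) {1..d}}
       = of_bool (f2_indep w B {1..d}) * (\<Prod>i<card J. 2 ^ d - 2 ^ (card B + i))"
  using assms(1,3)
proof (induction J rule: finite_induct)
  case empty
  then show ?case by (simp add: PiE_empty_domain)
next
  case (insert a J)
  let ?P = "\<lambda>v. f2_indep (override_on w v J) (B \<union> J) {1..d}"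
  let ?span = "\<lambda>v. (\<lambda>C. f2_sum (override_on w v J) C {1..d}) ` Pow (B \<union> J)"
  have aBJ: "a \<notin> B \<union> J" and fin: "finite (B \<union> J)" and card: "card (B \<union> J) = card B + card J"
    using insert assms(2) by (auto simp: card_Un_disjoint)
  have step: "f2_indep (override_on w (v(a := y)) (insert a J)) (B \<union> insert a J) {1..d} \<longleftrightarrow>
              ?P v \<and> {j\<in>{1..d}. y j} \<notin> ?span v" for v y
  proof -
    have "override_on w (v(a := y)) (insert a J) = (override_on w v J)(a := y)"
      using insert(2) by (auto simp: override_on_def)
    moreover have "B \<union> insert a J = insert a (B \<union> J)" by simp
    ultimately show ?thesis by (simp only:) (rule f2_indep_insert[OF aBJ fin])
  qed
  have "card {v\<in>PiE (insert a J) (\<lambda>_. cube d). f2_indep (override_on w v (insert a J)) (B \<union> insert a J) {1..d}}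
      = (\<Sum>v\<in>PiE J (\<lambda>_. cube d). card {y\<in>cube d. ?P v \<and> {j\<in>{1..d}. y j} \<notin> ?span v})"
    unfolding card_PiE_insert_filter[OF insert(2,1) finite_cube] step ..
  also have "\<dots> = (\<Sum>v\<in>PiE J (\<lambda>_. cube d). of_bool (?P v) * (2 ^ d - 2 ^ (card B + card J)))"
    using card_cube_notin_f2_span[OF fin] card by (intro sum.cong) auto
  also have "\<dots> = card {v\<in>PiE J (\<lambda>_. cube d). ?P v} * (2 ^ d - 2 ^ (card B + card J))"
    using insert(1) by (simp add: sum_distrib_right card_eq_sum_of_bool finite_PiE)
  finally show ?case
    using insert by (simp add: mult.assoc)
qed

lemma card_f2_indep_families:
  assumes "finite T"
  shows "card {u\<in>PiE T (\<lambda>_. cube d). f2_indep u T {1..d}} = (\<Prod>i<card T. 2 ^ d - 2 ^ i)"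
proof -
  have "f2_indep (override_on w u T) T {1..d} \<longleftrightarrow> f2_indep u T {1..d}" for w u
    by (rule f2_indep_cong) simp
  then show ?thesis
    using card_f2_indep_extensions[OF assms finite.emptyI, of d undefined] by simp
qed

lemma prod_pow2_diff_eq_Pk:
  "(\<Prod>i<m. (2::real) ^ (b + m) - 2 ^ (b + i)) = 2 ^ ((b + m) * m) * Pk m"
proof -
  have factor: "(2::real) ^ (b + m) - 2 ^ (b + i) = 2 ^ (b + m) * (1 - 1 / 2 ^ (m - i))" if "i < m" for i
  proof -
    have "(2::real) ^ (b + m) = 2 ^ (b + i) * 2 ^ (m - i)"
      using that by (simp flip: power_add)
    then show ?thesis by (simp add: field_simps)
  qed
  have "(\<Prod>i<m. 1 - 1 / (2::real) ^ (m - i)) = Pk m"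
    unfolding Pk_def by (rule prod.reindex_bij_witness[where i = "\<lambda>j. m - j" and j = "\<lambda>i. m - i"]) auto
  then show ?thesis
    by (simp add: factor prod.distrib flip: power_mult)
qed

lemma of_nat_prod_pow2_diff:
  assumes "b + m \<le> d"
  shows "real (\<Prod>i<m. 2 ^ d - 2 ^ (b + i) :: nat) = (\<Prod>i<m. (2::real) ^ d - 2 ^ (b + i))"
  using assms by (simp add: of_nat_diff power_increasing)

lemma prod_lessThan_add:
  "(\<Prod>i<t + k. f i) = (\<Prod>i<t. f i) * (\<Prod>i<k. f (t + i))" for f :: "nat \<Rightarrow> 'a::comm_monoid_mult"
  by (induction k) (simp_all add: mult.assoc)

lemma dt_monomial:
  assumes "S \<subseteq> {1..n}" "card S = k"
  shows "dt k n (\<lambda>x. \<forall>i\<in>S. x i) = Pk k"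
proof -
  have fin: "finite S" using assms(1) by (rule finite_subset) simp
  have "dt k n (\<lambda>x. \<forall>i\<in>S. x i) = card {w\<in>PiE S (\<lambda>_. cube k). f2_indep w S {1..k}} / 2 ^ (k * card S)"
  proof (rule dt_eq_card_columns[OF assms(1)])
    show "deriv_val k (\<lambda>x. \<forall>i\<in>S. x i) us u0 \<longleftrightarrow> f2_indep (transpose_tuple n k us) S {1..k}" for us u0
      using deriv_val_monomial[OF fin assms(2)] f2_indep_transpose_tuple[OF assms] by simp
    show "f2_indep w S {1..k} \<longleftrightarrow> f2_indep w' S {1..k}" if "\<And>j. j \<in> S \<Longrightarrow> w j = w' j" for w w'
      using that by (intro f2_indep_cong) auto
  qed
  also have "real (card {w\<in>PiE S (\<lambda>_. cube k). f2_indep w S {1..k}}) = 2 ^ (k * k) * Pk k"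
    using card_f2_indep_families[OF fin, of k] of_nat_prod_pow2_diff[of 0 k k]
      prod_pow2_diff_eq_Pk[where b = 0 and m = k] assms(2) by simp
  finally show ?thesis using assms(2) by simp
qed

lemma card_f2_indep_within:
  assumes "finite S" "finite R" "S \<inter> R = {}"
  shows "card {w\<in>PiE (S \<union> R) (\<lambda>_. cube d). f2_indep w S {1..d}} =
         (\<Prod>i<card S. 2 ^ d - 2 ^ i) * 2 ^ (d * card R)"
proof -
  have "card {w\<in>PiE (S \<union> R) (\<lambda>_. cube d). f2_indep w S {1..d} \<and> True} =
        card {u\<in>PiE S (\<lambda>_. cube d). f2_indep u S {1..d}} * card {v\<in>PiE R (\<lambda>_. cube d). True}"
    using assms by (intro card_PiE_Un_filter_conj f2_indep_cong) auto
  also have "\<dots> = (\<Prod>i<card S. 2 ^ d - 2 ^ i) * 2 ^ (d * card R)"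
    unfolding card_f2_indep_families[OF assms(1)] using assms(2)
    by (simp add: card_PiE card_cube power_mult)
  finally show ?thesis by simp
qed

lemma card_f2_indep_both:
  assumes fin: "finite T" "finite A" "finite B"
    and disj: "T \<inter> A = {}" "T \<inter> B = {}" "A \<inter> B = {}"
  shows "card {w\<in>PiE (T \<union> A \<union> B) (\<lambda>_. cube d). f2_indep w (T \<union> A) {1..d} \<and> f2_indep w (T \<union> B) {1..d}} =
         (\<Prod>i<card T. 2 ^ d - 2 ^ i) * (\<Prod>i<card A. 2 ^ d - 2 ^ (card T + i)) * (\<Prod>i<card B. 2 ^ d - 2 ^ (card T + i))"
    (is "card {w\<in>PiE _ ?F. ?p w \<and> ?q w} = ?G * ?EA * ?EB")
proof -
  have "card {w\<in>PiE (T \<union> A \<union> B) ?F. ?p w \<and> ?q w} =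
        (\<Sum>u\<in>PiE T ?F. card {v\<in>PiE A ?F. ?p (override_on u v A)} * card {v\<in>PiE B ?F. ?q (override_on u v B)})"
    using fin disj by (intro card_PiE_Un_Un_filter_conj f2_indep_cong) auto
  also have "\<dots> = (\<Sum>u\<in>PiE T ?F. of_bool (f2_indep u T {1..d}) * (?EA * ?EB))"
    unfolding card_f2_indep_extensions[OF fin(2,1) disj(1)] card_f2_indep_extensions[OF fin(3,1) disj(2)]
    by (intro sum.cong) auto
  also have "\<dots> = ?G * (?EA * ?EB)"
    unfolding card_f2_indep_families[OF fin(1), symmetric]
    using fin(1) by (simp add: sum_distrib_right card_eq_sum_of_bool finite_PiE)
  finally show ?thesis by (simp add: mult.assoc)
qed

lemma card_f2_indep_xor:
  assumes fin: "finite T" "finite A" "finite B"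
    and disj: "T \<inter> A = {}" "T \<inter> B = {}" "A \<inter> B = {}"
    and card: "card A = k" "card B = k" and d: "d = card T + k"
  shows "real (card {w\<in>PiE (T \<union> A \<union> B) (\<lambda>_. cube d).
                      f2_indep w (T \<union> A) {1..d} \<noteq> f2_indep w (T \<union> B) {1..d}})
       = 2 * (2 ^ (d * d) * Pk d) * (2 ^ (d * k) * (1 - Pk k))"
proof -
  let ?F = "\<lambda>_. cube d"
  let ?p = "\<lambda>w. f2_indep w (T \<union> A) {1..d}" and ?q = "\<lambda>w. f2_indep w (T \<union> B) {1..d}"
  define G where "G = (\<Prod>i<d. 2 ^ d - 2 ^ i :: nat)"
  define E where "E = (\<Prod>i<k. 2 ^ d - 2 ^ (card T + i) :: nat)"
  define c where "c = (2 ^ (d * k) :: nat)"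
  have G_split: "G = (\<Prod>i<card T. 2 ^ d - 2 ^ i) * E"
    unfolding G_def E_def d prod_lessThan_add ..
  have cTA: "card (T \<union> A) = d" and cTB: "card (T \<union> B) = d"
    using fin disj card d by (simp_all add: card_Un_disjoint)
  have card_p: "card {w\<in>PiE (T \<union> A \<union> B) ?F. ?p w} = G * c"
    using card_f2_indep_within[of "T \<union> A" B d] fin disj card cTA unfolding G_def c_def by auto
  have "T \<union> B \<union> A = T \<union> A \<union> B" by blast
  then have card_q: "card {w\<in>PiE (T \<union> A \<union> B) ?F. ?q w} = G * c"
    using card_f2_indep_within[of "T \<union> B" A d] fin disj card cTB unfolding G_def c_def by auto
  have count: "card {w\<in>PiE (T \<union> A \<union> B) ?F. ?p w \<noteq> ?q w} + 2 * (G * E) = 2 * (G * c)"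
    using card_filter_xor[of "PiE (T \<union> A \<union> B) ?F" ?p ?q] card_p card_q
      card_f2_indep_both[OF fin disj, of d] fin card
    unfolding G_split E_def by (simp add: finite_PiE)
  have N: "real (card {w\<in>PiE (T \<union> A \<union> B) ?F. ?p w \<noteq> ?q w}) = 2 * real G * (real c - real E)"
    using arg_cong[where f = real, OF count] by (simp add: algebra_simps)
  have "real G = 2 ^ (d * d) * Pk d"
    using of_nat_prod_pow2_diff[where b = 0 and m = d and d = d]
      prod_pow2_diff_eq_Pk[where b = 0 and m = d] unfolding G_def by simp
  moreover have "real E = 2 ^ (d * k) * Pk k"
    using of_nat_prod_pow2_diff[where b = "card T" and m = k and d = d]
      prod_pow2_diff_eq_Pk[where b = "card T" and m = k] d unfolding E_def by simp
  ultimately show ?thesis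
    unfolding N c_def by (simp add: algebra_simps)
qed

lemma dt_xor_monomials:
  assumes sub: "T \<union> A \<union> B \<subseteq> {1..n}"
    and disj: "T \<inter> A = {}" "T \<inter> B = {}" "A \<inter> B = {}"
    and card: "card A = k" "card B = k"
  shows "dt (card T + k) n (\<lambda>x. (\<forall>i\<in>T \<union> A. x i) \<noteq> (\<forall>i\<in>T \<union> B. x i))
       = 2 * Pk (card T + k) * (1 - Pk k)"
proof -
  define d where "d = card T + k"
  have fin: "finite T" "finite A" "finite B"
    using sub finite_subset[OF _ finite_atLeastAtMost] by auto
  have cTA: "card (T \<union> A) = d" and cTB: "card (T \<union> B) = d"
    using fin disj card unfolding d_def by (simp_all add: card_Un_disjoint)
  have subA: "T \<union> A \<subseteq> {1..n}" and subB: "T \<union> B \<subseteq> {1..n}"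
    using sub by auto
  have cS: "card (T \<union> A \<union> B) = d + k"
    using fin disj card unfolding d_def by (simp add: card_Un_disjoint Int_Un_distrib2)
  let ?Q = "\<lambda>w. f2_indep w (T \<union> A) {1..d} \<noteq> f2_indep w (T \<union> B) {1..d}"
  have "dt d n (\<lambda>x. (\<forall>i\<in>T \<union> A. x i) \<noteq> (\<forall>i\<in>T \<union> B. x i))
      = card {w\<in>PiE (T \<union> A \<union> B) (\<lambda>_. cube d). ?Q w} / 2 ^ (d * card (T \<union> A \<union> B))"
  proof (rule dt_eq_card_columns[OF sub])
    show "deriv_val d (\<lambda>x. (\<forall>i\<in>T \<union> A. x i) \<noteq> (\<forall>i\<in>T \<union> B. x i)) us u0 \<longleftrightarrow>
          ?Q (transpose_tuple n d us)" for us u0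
      unfolding deriv_val_xor deriv_val_monomial[OF finite_UnI[OF fin(1,2)] cTA]
        deriv_val_monomial[OF finite_UnI[OF fin(1,3)] cTB]
        f2_indep_transpose_tuple[OF subA cTA] f2_indep_transpose_tuple[OF subB cTB] ..
    show "?Q w \<longleftrightarrow> ?Q w'" if eq: "\<And>j. j \<in> T \<union> A \<union> B \<Longrightarrow> w j = w' j" for w w'
    proof -
      have "f2_indep w (T \<union> A) {1..d} \<longleftrightarrow> f2_indep w' (T \<union> A) {1..d}"
        by (rule f2_indep_cong) (simp add: eq)
      moreover have "f2_indep w (T \<union> B) {1..d} \<longleftrightarrow> f2_indep w' (T \<union> B) {1..d}"
        by (rule f2_indep_cong) (metis Un_iff eq)
      ultimately show ?thesis by simp
    qed
  qed
  also have "\<dots> = 2 * Pk d * (1 - Pk k)"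
    using card_f2_indep_xor[OF fin disj card d_def] cS by (simp add: power_add add_mult_distrib2)
  finally show ?thesis unfolding d_def .
qed

theorem corollary2:
  fixes k t :: nat
  assumes "k \<ge> 1"
  shows "(\<forall>n \<ge> k. dt k n (\<lambda>x. \<forall>i\<in>{1..k}. x i) = Pk k)
       \<and> (\<forall>n \<ge> 2 * k.
           dt k n (\<lambda>x. (\<forall>i\<in>{1..k}. x i) \<noteq> (\<forall>i\<in>{k+1..2*k}. x i)) = 2 * Pk k * (1 - Pk k))
       \<and> (\<forall>n \<ge> 2 * k + t.
           dt (k + t) n (\<lambda>x. (\<forall>i\<in>{2*k+1..2*k+t}. x i) \<and>
                              ((\<forall>i\<in>{1..k}. x i) \<noteq> (\<forall>i\<in>{k+1..2*k}. x i)))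
             = 2 * Pk (k + t) * (1 - Pk k))"
proof (intro conjI allI impI)
  fix n assume "k \<le> n"
  then show "dt k n (\<lambda>x. \<forall>i\<in>{1..k}. x i) = Pk k"
    by (intro dt_monomial) auto
next
  fix n assume "2 * k \<le> n"
  then show "dt k n (\<lambda>x. (\<forall>i\<in>{1..k}. x i) \<noteq> (\<forall>i\<in>{k+1..2*k}. x i)) = 2 * Pk k * (1 - Pk k)"
    using dt_xor_monomials[of "{}" "{1..k}" "{k+1..2*k}" n k] by auto
next
  fix n assume "2 * k + t \<le> n"
  moreover have "(\<lambda>x. (\<forall>i\<in>{2*k+1..2*k+t}. x i) \<and> ((\<forall>i\<in>{1..k}. x i) \<noteq> (\<forall>i\<in>{k+1..2*k}. x i)))
    = (\<lambda>x. (\<forall>i\<in>{2*k+1..2*k+t} \<union> {1..k}. x i) \<noteq> (\<forall>i\<in>{2*k+1..2*k+t} \<union> {k+1..2*k}. x i))"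
    by (auto simp: ball_Un)
  ultimately show "dt (k + t) n (\<lambda>x. (\<forall>i\<in>{2*k+1..2*k+t}. x i) \<and>
                              ((\<forall>i\<in>{1..k}. x i) \<noteq> (\<forall>i\<in>{k+1..2*k}. x i)))
             = 2 * Pk (k + t) * (1 - Pk k)"
    using dt_xor_monomials[of "{2*k+1..2*k+t}" "{1..k}" "{k+1..2*k}" n k] by (auto simp: add.commute)
qed

end
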